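(* Let $\theta>0$, $\lambda>0$, $\mu>0$ with $\lambda<\mu+1$. For $\alpha\ge 0$, $d\ge 0$ let $$\pi(\alpha,d)=(\theta+\mu)\alpha-\frac{\alpha^2}{2}-\frac{\alpha}{\alpha+d}\,\lambda\alpha\theta-d .$$ For $\alpha>0$ let $\Pi(\alpha;\theta)=\max_{d\ge 0}\pi(\alpha,d)$, and let $\alpha^*(\theta)$ denote the maximizer of $\Pi(\alpha;\theta)$ over $\alpha>0$, which equals $$\alpha^*(\theta)=\begin{cases}\mu+\theta(1-\lambda), & \lambda\theta\le 1,\\ \theta+\mu+1-2\sqrt{\lambda\theta}, & \lambda\theta>1.\end{cases}$$ Then $$\frac{\partial\alpha^*}{\partial\theta}=\begin{cases}1-\lambda, & \lambda\theta\le 1,\\ 1-\sqrt{\lambda/\theta}, & \lambda\theta>1.\end{cases}$$ If $\lambda>1$: (i) $\alpha^*$ is strictly decreasing in $\theta$ on $(0,\lambda)$; (ii) $\alpha^*$ is strictly increasing in $\theta$ on $(\lambda,\infty)$; (iii) the global minimum of $\alpha^*$ over $\theta>0$ equals $\mu+1-\lambda$ and is attained at $\theta=\lambda$. If $\lambda\le 1$: $\partial\alpha^*/\partial\theta\ge 0$ for all $\theta>0$.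
   Context: Model of a firm choosing AI deployment $\alpha\ge 0$ and security investment $d\ge 0$. $\theta$ is AI capability, $\lambda$ conditional breach-loss magnitude, $\mu$ complementary organizational readiness. Breach probability is $p(\alpha,d)=\alpha/(\alpha+d)$ (with convention $p(0,d)=0$), breach damage is $L(\alpha,\theta)=\lambda\alpha\theta$, and profit is productivity $(\theta+\mu)\alpha-\alpha^2/2$ minus expected loss $p\cdot L$ minus $d$. *)

theory Defs
  imports "HOL-Analysis.Analysis"
begin

text \<open>Profit pi(alpha,d) = (theta+mu) alpha - alpha^2/2 - alpha/(alpha+d) * lam*alpha*theta - d.
  For alpha = d = 0 Isabelle's division gives 0/0 = 0, matching the convention p(0,d)=0.\<close>
definition profit :: "real \<Rightarrow> real \<Rightarrow> real \<Rightarrow> real \<Rightarrow> real \<Rightarrow> real" where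
  "profit lam mu \<theta> \<alpha> d =
     (\<theta> + mu) * \<alpha> - \<alpha>^2 / 2 - (\<alpha> / (\<alpha> + d)) * (lam * \<alpha> * \<theta>) - d"

definition Pi_val :: "real \<Rightarrow> real \<Rightarrow> real \<Rightarrow> real \<Rightarrow> real" where
  "Pi_val lam mu \<theta> \<alpha> = (SUP d\<in>{0..}. profit lam mu \<theta> \<alpha> d)"

definition alpha_star :: "real \<Rightarrow> real \<Rightarrow> real \<Rightarrow> real" where
  "alpha_star lam mu \<theta> =
     (if lam * \<theta> \<le> 1 then mu + \<theta> * (1 - lam)
      else \<theta> + mu + 1 - 2 * sqrt (lam * \<theta>))"

end

theory Submission
  imports Defs
begin

text \<open>With \<open>s = \<alpha> + d\<close> the firm minimises \<open>\<lambda>\<theta>\<alpha>\<^sup>2 / s + s\<close> over \<open>s \<ge> \<alpha>\<close>; the minimiser is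
  \<open>s = \<alpha> max 1 (sqrt (\<lambda>\<theta>))\<close>, and then \<open>\<Pi>(\<alpha>;\<theta>) = \<alpha>\<^sup>*(\<theta>) \<alpha> - \<alpha>\<^sup>2/2\<close>, a parabola in \<open>\<alpha>\<close>
  with vertex \<open>\<alpha>\<^sup>*(\<theta>)\<close>. For \<open>\<lambda>\<theta> > 1\<close> one has \<open>\<alpha>\<^sup>*(\<theta>) = (sqrt \<theta> - sqrt \<lambda>)\<^sup>2 + \<mu> + 1 - \<lambda>\<close>,
  which gives positivity and the minimum at \<open>\<theta> = \<lambda>\<close>. Both branches of \<open>\<alpha>\<^sup>*\<close> have slope
  \<open>1 - \<lambda>\<close> at the kink \<open>\<theta> = 1/\<lambda>\<close>, so \<open>\<alpha>\<^sup>*\<close> is differentiable everywhere and its monotonicity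
  is read off the sign of the derivative.\<close>

lemma DERIV_if_le_at_split:
  fixes g h :: "real \<Rightarrow> real"
  assumes g: "(g has_real_derivative D) (at c)" and h: "(h has_real_derivative D) (at c)"
    and gh: "g c = h c"
  shows "((\<lambda>x. if x \<le> c then g x else h x) has_real_derivative D) (at c)"
proof -
  define f where "f x = (if x \<le> c then g x else h x)" for x
  have "((\<lambda>k. (f (c + k) - f c) / k) \<longlongrightarrow> D) (at_left 0)"
  proof (rule tendsto_cong[THEN iffD1])
    show "\<forall>\<^sub>F k in at_left 0. (g (c + k) - g c) / k = (f (c + k) - f c) / k"
      by (auto simp: eventually_at_left_field f_def intro: exI[of _ "-1"])
    show "((\<lambda>k. (g (c + k) - g c) / k) \<longlongrightarrow> D) (at_left 0)"
      using g by (simp add: DERIV_def filterlim_at_split)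
  qed
  moreover have "((\<lambda>k. (f (c + k) - f c) / k) \<longlongrightarrow> D) (at_right 0)"
  proof (rule tendsto_cong[THEN iffD1])
    show "\<forall>\<^sub>F k in at_right 0. (h (c + k) - h c) / k = (f (c + k) - f c) / k"
      using gh by (auto simp: eventually_at_right_field f_def intro: exI[of _ 1])
    show "((\<lambda>k. (h (c + k) - h c) / k) \<longlongrightarrow> D) (at_right 0)"
      using h by (simp add: DERIV_def filterlim_at_split)
  qed
  ultimately show ?thesis
    by (simp add: DERIV_def filterlim_at_split f_def[abs_def])
qed

lemma DERIV_if_le:
  fixes g h :: "real \<Rightarrow> real"
  assumes g: "t \<le> c \<Longrightarrow> (g has_real_derivative D) (at t)"
    and h: "c \<le> t \<Longrightarrow> (h has_real_derivative D) (at t)"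
    and gh: "g c = h c"
  shows "((\<lambda>x. if x \<le> c then g x else h x) has_real_derivative D) (at t)"
proof (cases t c rule: linorder_cases)
  case less
  have "\<forall>\<^sub>F x in nhds t. x \<in> {..<c}"
    using less by (intro eventually_nhds_in_open) auto
  then have "\<forall>\<^sub>F x in nhds t. (if x \<le> c then g x else h x) = g x"
    by eventually_elim auto
  then show ?thesis
    using g less by (subst DERIV_cong_ev) auto
next
  case greater
  have "\<forall>\<^sub>F x in nhds t. x \<in> {c<..}"
    using greater by (intro eventually_nhds_in_open) auto
  then have "\<forall>\<^sub>F x in nhds t. (if x \<le> c then g x else h x) = h x"
    by eventually_elim auto
  then show ?thesis
    using h greater by (subst DERIV_cong_ev) auto
qed (use DERIV_if_le_at_split g h gh in auto)

definition security_cost :: "real \<Rightarrow> real \<Rightarrow> real \<Rightarrow> real" where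
  "security_cost k \<alpha> d = k * \<alpha>\<^sup>2 / (\<alpha> + d) + d"

definition optimal_security :: "real \<Rightarrow> real \<Rightarrow> real" where
  "optimal_security k \<alpha> = (if k \<le> 1 then 0 else \<alpha> * (sqrt k - 1))"

lemma profit_eq_security_cost:
  "profit lam mu \<theta> \<alpha> d = (\<theta> + mu) * \<alpha> - \<alpha>\<^sup>2 / 2 - security_cost (lam * \<theta>) \<alpha> d"
  by (simp add: profit_def security_cost_def power2_eq_square)

lemma optimal_security_nonneg: "\<alpha> \<ge> 0 \<Longrightarrow> optimal_security k \<alpha> \<ge> 0"
  by (simp add: optimal_security_def)

lemma security_cost_optimal_security:
  assumes "k \<ge> 0" and "\<alpha> > 0"
  shows "security_cost k \<alpha> (optimal_security k \<alpha>) =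
           (if k \<le> 1 then k * \<alpha> else \<alpha> * (2 * sqrt k - 1))"
proof (cases "k \<le> 1")
  case False
  then have "sqrt k > 0" and "(sqrt k)\<^sup>2 = k" by auto
  with False assms show ?thesis
    by (simp add: security_cost_def optimal_security_def field_simps power2_eq_square)
qed (use assms in \<open>simp add: security_cost_def optimal_security_def power2_eq_square\<close>)

text \<open>With \<open>s = \<alpha> + d \<ge> \<alpha>\<close>, the excess cost over the claimed minimum is
  \<open>(s - \<alpha>) (s - k \<alpha>) / s\<close> if \<open>k \<le> 1\<close> and \<open>(s - \<alpha> sqrt k)\<^sup>2 / s\<close> otherwise.\<close>
lemma security_cost_optimal_security_le:
  assumes "k \<ge> 0" and "\<alpha> > 0" and "d \<ge> 0"
  shows "security_cost k \<alpha> (optimal_security k \<alpha>) \<le> security_cost k \<alpha> d"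
proof -
  define s where "s = \<alpha> + d"
  have s: "s \<ge> \<alpha>" "s > 0" using assms by (auto simp: s_def)
  have cost: "security_cost k \<alpha> d = k * \<alpha>\<^sup>2 / s + s - \<alpha>"
    by (simp add: security_cost_def s_def)
  show ?thesis
  proof (cases "k \<le> 1")
    case True
    have "k * \<alpha> \<le> s"
      using True s assms mult_left_le_one_le[of \<alpha> k] by linarith
    then have "0 \<le> (s - \<alpha>) * (s - k * \<alpha>) / s"
      using s by simp
    also have "\<dots> = security_cost k \<alpha> d - k * \<alpha>"
      using s by (simp add: cost field_simps power2_eq_square)
    finally show ?thesis
      using True assms by (simp add: security_cost_optimal_security)
  next
    case False
    have "0 \<le> (s - \<alpha> * sqrt k)\<^sup>2 / s"
      using s by simp
    also have "\<dots> = security_cost k \<alpha> d - \<alpha> * (2 * sqrt k - 1)"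
      using s assms by (simp add: cost field_simps power2_eq_square power_mult_distrib)
    finally show ?thesis
      using False assms by (simp add: security_cost_optimal_security)
  qed
qed

lemma profit_optimal_security:
  assumes "lam * \<theta> \<ge> 0" and "\<alpha> > 0"
  shows "profit lam mu \<theta> \<alpha> (optimal_security (lam * \<theta>) \<alpha>) = alpha_star lam mu \<theta> * \<alpha> - \<alpha>\<^sup>2 / 2"
  using assms
  by (simp add: profit_eq_security_cost security_cost_optimal_security alpha_star_def algebra_simps)

lemma profit_le_optimal_security:
  assumes "lam * \<theta> \<ge> 0" and "\<alpha> > 0" and "d \<ge> 0"
  shows "profit lam mu \<theta> \<alpha> d \<le> profit lam mu \<theta> \<alpha> (optimal_security (lam * \<theta>) \<alpha>)"
  using security_cost_optimal_security_le[OF assms] by (simp add: profit_eq_security_cost)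

lemma Pi_val_eq_optimal_security:
  assumes "lam * \<theta> \<ge> 0" and "\<alpha> > 0"
  shows "Pi_val lam mu \<theta> \<alpha> = profit lam mu \<theta> \<alpha> (optimal_security (lam * \<theta>) \<alpha>)"
  unfolding Pi_val_def
  by (rule cSup_eq_maximum)
    (use assms optimal_security_nonneg profit_le_optimal_security in auto)

lemma Pi_val_eq:
  assumes "lam * \<theta> \<ge> 0" and "\<alpha> > 0"
  shows "Pi_val lam mu \<theta> \<alpha> = alpha_star lam mu \<theta> * \<alpha> - \<alpha>\<^sup>2 / 2"
  using assms by (simp add: Pi_val_eq_optimal_security profit_optimal_security)

lemma linear_minus_half_square_less:
  fixes a x :: real
  assumes "x \<noteq> a"
  shows "a * x - x\<^sup>2 / 2 < a * a - a\<^sup>2 / 2"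
proof -
  have "0 < (x - a)\<^sup>2" using assms by simp
  then show ?thesis by (simp add: power2_eq_square algebra_simps)
qed

lemma alpha_star_eq_sqrt_form:
  assumes "lam > 0" and "\<theta> > 0" and "lam * \<theta> > 1"
  shows "alpha_star lam mu \<theta> = (sqrt \<theta> - sqrt lam)\<^sup>2 + mu + 1 - lam"
  using assms by (simp add: alpha_star_def power2_diff real_sqrt_mult algebra_simps)

lemma alpha_star_ge_min:
  assumes "lam > 0" and "\<theta> \<ge> 0"
  shows "alpha_star lam mu \<theta> \<ge> min mu (mu + 1 - lam)"
proof (cases "lam * \<theta> \<le> 1")
  case True
  show ?thesis
  proof (cases "lam \<le> 1")
    case False
    have "1 * \<theta> \<le> lam * \<theta>"
      using False assms by (intro mult_right_mono) auto
    then have "\<theta> \<le> 1"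
      using True by linarith
    then have "\<theta> * (1 - lam) \<ge> 1 - lam"
      using False by (simp add: mult_le_cancel_right2)
    then show ?thesis using True by (simp add: alpha_star_def)
  qed (use True assms in \<open>simp add: alpha_star_def\<close>)
next
  case False
  then have "\<theta> > 0" using assms by (cases "\<theta> = 0") auto
  then have "alpha_star lam mu \<theta> \<ge> mu + 1 - lam"
    using False assms by (simp add: alpha_star_eq_sqrt_form)
  then show ?thesis by linarith
qed

lemma alpha_star_pos:
  assumes "lam > 0" and "mu > 0" and "lam < mu + 1" and "\<theta> \<ge> 0"
  shows "alpha_star lam mu \<theta> > 0"
  using alpha_star_ge_min[of lam \<theta> mu] assms by linarith

lemma alpha_star_eq_if:
  assumes "lam > 0"
  shows "alpha_star lam mu =
           (\<lambda>\<theta>. if \<theta> \<le> 1 / lam then mu + \<theta> * (1 - lam) else \<theta> + mu + 1 - 2 * sqrt (lam * \<theta>))"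
  using assms by (simp add: alpha_star_def fun_eq_iff field_simps)

definition alpha_star_deriv :: "real \<Rightarrow> real \<Rightarrow> real" where
  "alpha_star_deriv lam \<theta> = (if lam * \<theta> \<le> 1 then 1 - lam else 1 - sqrt (lam / \<theta>))"

lemma has_real_derivative_sqrt_branch:
  assumes "lam > 0" and "\<theta> > 0"
  shows "((\<lambda>\<theta>. \<theta> + mu + 1 - 2 * sqrt (lam * \<theta>)) has_real_derivative 1 - sqrt (lam / \<theta>)) (at \<theta>)"
proof -
  have "sqrt (lam * \<theta>) > 0" using assms by simp
  then have "((\<lambda>\<theta>. \<theta> + mu + 1 - 2 * sqrt (lam * \<theta>)) has_real_derivative
               1 - 2 * (inverse (sqrt (lam * \<theta>)) / 2 * (lam * 1))) (at \<theta>)"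
    by (auto intro!: derivative_eq_intros)
  moreover have "lam / sqrt (lam * \<theta>) = sqrt (lam / \<theta>)"
    using assms by (simp add: real_sqrt_mult real_sqrt_divide field_simps)
  ultimately show ?thesis by (simp add: field_simps)
qed

lemma has_real_derivative_alpha_star:
  assumes "lam > 0" and "\<theta> > 0"
  shows "(alpha_star lam mu has_real_derivative alpha_star_deriv lam \<theta>) (at \<theta>)"
  unfolding alpha_star_eq_if[OF \<open>lam > 0\<close>]
proof (rule DERIV_if_le)
  assume "\<theta> \<le> 1 / lam"
  then show "((\<lambda>\<theta>. mu + \<theta> * (1 - lam)) has_real_derivative alpha_star_deriv lam \<theta>) (at \<theta>)"
    using assms by (auto intro!: derivative_eq_intros simp: alpha_star_deriv_def field_simps)
next
  assume "1 / lam \<le> \<theta>"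
  \<comment> \<open>at the kink the slope of the square-root branch is \<open>1 - lam\<close>, matching the linear one\<close>
  moreover have "sqrt (lam / \<theta>) = lam" if "\<theta> = 1 / lam"
    using assms that by (simp add: power2_eq_square[symmetric])
  ultimately have "1 - sqrt (lam / \<theta>) = alpha_star_deriv lam \<theta>"
    using assms by (auto simp: alpha_star_deriv_def field_simps)
  then show "((\<lambda>\<theta>. \<theta> + mu + 1 - 2 * sqrt (lam * \<theta>)) has_real_derivative alpha_star_deriv lam \<theta>) (at \<theta>)"
    using has_real_derivative_sqrt_branch[OF assms] by simp
next
  show "mu + 1 / lam * (1 - lam) = 1 / lam + mu + 1 - 2 * sqrt (lam * (1 / lam))"
    using assms by (simp add: field_simps)
qed

lemma alpha_star_deriv_neg:
  assumes "lam > 1" and "0 < \<theta>" and "\<theta> < lam"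
  shows "alpha_star_deriv lam \<theta> < 0"
proof -
  have "sqrt (lam / \<theta>) > 1" using assms by simp
  then show ?thesis using assms by (simp add: alpha_star_deriv_def)
qed

lemma alpha_star_deriv_pos:
  assumes "lam > 1" and "\<theta> > lam"
  shows "alpha_star_deriv lam \<theta> > 0"
proof -
  have "lam * \<theta> > 1 * 1" using assms by (intro mult_strict_mono) auto
  moreover have "sqrt (lam / \<theta>) < 1" using assms by simp
  ultimately show ?thesis by (simp add: alpha_star_deriv_def)
qed

lemma alpha_star_deriv_nonneg:
  assumes "0 < lam" and "lam \<le> 1" and "\<theta> > 0"
  shows "alpha_star_deriv lam \<theta> \<ge> 0"
proof (cases "lam * \<theta> \<le> 1")
  case False
  have "lam * \<theta> \<le> \<theta>" using assms by (intro mult_left_le_one_le) auto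
  then have "\<theta> > 1" using False by linarith
  then have "lam / \<theta> \<le> 1" using assms by simp
  then show ?thesis using False by (simp add: alpha_star_deriv_def)
qed (use assms in \<open>simp add: alpha_star_deriv_def\<close>)

lemma alpha_star_strict_antimono:
  assumes "lam > 1"
  shows "strict_antimono_on {0<..<lam} (alpha_star lam mu)"
proof (rule monotone_onI)
  fix x y assume xy: "x \<in> {0<..<lam}" "y \<in> {0<..<lam}" "x < y"
  show "alpha_star lam mu x > alpha_star lam mu y"
  proof (rule DERIV_neg_imp_decreasing[OF \<open>x < y\<close>])
    fix z assume "x \<le> z" "z \<le> y"
    then have "0 < z" "z < lam" using xy by auto
    then show "\<exists>D. (alpha_star lam mu has_real_derivative D) (at z) \<and> D < 0"
      using assms has_real_derivative_alpha_star[of lam z] alpha_star_deriv_neg[of lam z] by auto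
  qed
qed

lemma alpha_star_strict_mono:
  assumes "lam > 1"
  shows "strict_mono_on {lam<..} (alpha_star lam mu)"
proof (rule monotone_onI)
  fix x y assume xy: "x \<in> {lam<..}" "y \<in> {lam<..}" "x < y"
  show "alpha_star lam mu x < alpha_star lam mu y"
  proof (rule DERIV_pos_imp_increasing[OF \<open>x < y\<close>])
    fix z assume "x \<le> z" "z \<le> y"
    then have "0 < z" "lam < z" using xy assms by auto
    then show "\<exists>D. (alpha_star lam mu has_real_derivative D) (at z) \<and> D > 0"
      using assms has_real_derivative_alpha_star[of lam z] alpha_star_deriv_pos[of lam z] by auto
  qed
qed

theorem proposition3:
  fixes lam mu :: real
  assumes "lam > 0" and "mu > 0" and "lam < mu + 1"
  shows
    \<comment> \<open>alpha*(theta) is the (unique) maximizer of Pi(.;theta) over alpha > 0, and the max over d is attained\<close>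
    "(\<forall>\<theta>>0. \<forall>\<alpha>>0. \<exists>d\<ge>0. Pi_val lam mu \<theta> \<alpha> = profit lam mu \<theta> \<alpha> d \<and>
                       (\<forall>d'\<ge>0. profit lam mu \<theta> \<alpha> d' \<le> profit lam mu \<theta> \<alpha> d))
     \<and> (\<forall>\<theta>>0. alpha_star lam mu \<theta> > 0 \<and>
          (\<forall>\<alpha>>0. \<alpha> \<noteq> alpha_star lam mu \<theta> \<longrightarrow>
              Pi_val lam mu \<theta> \<alpha> < Pi_val lam mu \<theta> (alpha_star lam mu \<theta>)))
     \<and> (\<forall>\<theta>>0. (alpha_star lam mu has_real_derivative
            (if lam * \<theta> \<le> 1 then 1 - lam else 1 - sqrt (lam / \<theta>))) (at \<theta>))
     \<and> (lam > 1 \<longrightarrow>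
          strict_antimono_on {0<..<lam} (alpha_star lam mu)
        \<and> strict_mono_on {lam<..} (alpha_star lam mu)
        \<and> alpha_star lam mu lam = mu + 1 - lam
        \<and> (\<forall>\<theta>>0. alpha_star lam mu lam \<le> alpha_star lam mu \<theta>))
     \<and> (lam \<le> 1 \<longrightarrow> (\<forall>\<theta>>0. deriv (alpha_star lam mu) \<theta> \<ge> 0))"
proof (intro conjI allI impI)
  fix \<theta> \<alpha> :: real assume "\<theta> > 0" "\<alpha> > 0"
  then show "\<exists>d\<ge>0. Pi_val lam mu \<theta> \<alpha> = profit lam mu \<theta> \<alpha> d \<and>
               (\<forall>d'\<ge>0. profit lam mu \<theta> \<alpha> d' \<le> profit lam mu \<theta> \<alpha> d)"
    using assms optimal_security_nonneg Pi_val_eq_optimal_security profit_le_optimal_security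
    by (intro exI[of _ "optimal_security (lam * \<theta>) \<alpha>"]) auto
next
  fix \<theta> :: real assume "\<theta> > 0"
  then show "alpha_star lam mu \<theta> > 0" using assms by (simp add: alpha_star_pos)
next
  fix \<theta> \<alpha> :: real assume "\<theta> > 0" "\<alpha> > 0" "\<alpha> \<noteq> alpha_star lam mu \<theta>"
  then show "Pi_val lam mu \<theta> \<alpha> < Pi_val lam mu \<theta> (alpha_star lam mu \<theta>)"
    using assms by (simp add: alpha_star_pos Pi_val_eq linear_minus_half_square_less)
next
  fix \<theta> :: real assume "\<theta> > 0"
  then show "(alpha_star lam mu has_real_derivative
               (if lam * \<theta> \<le> 1 then 1 - lam else 1 - sqrt (lam / \<theta>))) (at \<theta>)"
    using assms has_real_derivative_alpha_star by (simp add: alpha_star_deriv_def)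
next
  assume "lam > 1"
  then show "strict_antimono_on {0<..<lam} (alpha_star lam mu)"
    by (rule alpha_star_strict_antimono)
next
  assume "lam > 1"
  then show "strict_mono_on {lam<..} (alpha_star lam mu)"
    by (rule alpha_star_strict_mono)
next
  assume "lam > 1"
  then show "alpha_star lam mu lam = mu + 1 - lam"
    using less_1_mult[of lam lam] by (simp add: alpha_star_def)
  moreover fix \<theta> :: real assume "\<theta> > 0"
  ultimately show "alpha_star lam mu lam \<le> alpha_star lam mu \<theta>"
    using alpha_star_ge_min[of lam \<theta> mu] \<open>lam > 1\<close> by simp
next
  fix \<theta> :: real assume "lam \<le> 1" "\<theta> > 0"
  then show "deriv (alpha_star lam mu) \<theta> \<ge> 0"
    using assms DERIV_imp_deriv[OF has_real_derivative_alpha_star] alpha_star_deriv_nonneg by simp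
qed

end
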